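(* Let $\Gamma=\{f_1,\dots,f_n\}$ be a family of weight-functions and suppose there is a nonzero vector $\mathbf{r}=(r_1,\dots,r_n)\in[0,1]^n$ such that $f_i(x_1,\dots,x_n)\le f_i(x_1+\lambda r_1,\dots,x_n+\lambda r_n)$ for every $i\in\{1,\dots,n\}$, every $\mathbf{x}\in[0,1]^n$ and every $\lambda\in[0,1]$ with $(x_1+\lambda r_1,\dots,x_n+\lambda r_n)\in[0,1]^n$. Then $\mathsf{BGM}_\Gamma$ (i.e. $\mathbf{x}\mapsto\sum_i f_i(\mathbf{x})x_i$) is an $\mathbf{r}$-increasing pre-aggregation function.
   Context: A family of weight-functions (FWF) is a family $\Gamma=\{f_i:[0,1]^n\to[0,1]\mid 1\le i\le n\}$ with $\sum_{i=1}^n f_i(\mathbf{x})=1$ for all $\mathbf{x}\in[0,1]^n$; $\mathsf{BGM}_\Gamma(\mathbf{x})=\sum_{i=1}^n f_i(\mathbf{x})\,x_i$. For a nonzero $\mathbf{r}\in\mathbb{R}^n$, $F:[0,1]^n\to[0,1]$ is $\mathbf{r}$-increasing if $F(\mathbf{x})\le F(x_1+tr_1,\dots,x_n+tr_n)$ for all $\mathbf{x}\in[0,1]^n$ and $t>0$ with $(x_1+tr_1,\dots,x_n+tr_n)\in[0,1]^n$. $F$ is a pre-aggregation function if $F(0,\dots,0)=0$, $F(1,\dots,1)=1$ and $F$ is $\mathbf{r}$-increasing for some nonzero $\mathbf{r}\in[0,1]^n$. *)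

theory Defs
  imports "HOL-Analysis.Analysis"
begin

definition unit_cube :: "(real ^ 'n) set" where
  "unit_cube = {x. \<forall>i. 0 \<le> x $ i \<and> x $ i \<le> 1}"

definition FWF :: "('n::finite \<Rightarrow> real ^ 'n \<Rightarrow> real) \<Rightarrow> bool" where
  "FWF f \<longleftrightarrow> (\<forall>x\<in>unit_cube. (\<forall>i. 0 \<le> f i x \<and> f i x \<le> 1) \<and> (\<Sum>i\<in>UNIV. f i x) = 1)"

definition BGM :: "('n::finite \<Rightarrow> real ^ 'n \<Rightarrow> real) \<Rightarrow> real ^ 'n \<Rightarrow> real" where
  "BGM f x = (\<Sum>i\<in>UNIV. f i x * x $ i)"

definition r_increasing :: "real ^ 'n \<Rightarrow> (real ^ 'n \<Rightarrow> real) \<Rightarrow> bool" where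
  "r_increasing r F \<longleftrightarrow>
     (\<forall>x\<in>unit_cube. \<forall>t::real. t > 0 \<longrightarrow> x + t *\<^sub>R r \<in> unit_cube \<longrightarrow> F x \<le> F (x + t *\<^sub>R r))"

definition pre_aggregation :: "(real ^ 'n \<Rightarrow> real) \<Rightarrow> bool" where
  "pre_aggregation F \<longleftrightarrow>
     (\<forall>x\<in>unit_cube. 0 \<le> F x \<and> F x \<le> 1) \<and>
     F (vec 0) = 0 \<and> F (vec 1) = 1 \<and>
     (\<exists>r\<in>unit_cube. r \<noteq> 0 \<and> r_increasing r F)"

end

theory Submission
  imports Defs
begin

text \<open>
  Along the direction \<open>r\<close> every weight is nondecreasing, while the weights always sum to 1;
  hence each weight is constant on the part of a ray \<open>x + t r\<close> inside the cube. Moving from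
  \<open>x\<close> to \<open>x + t r\<close> then changes \<open>BGM\<close> only through its arguments, by \<open>t \<Sum>\<^sub>i f\<^sub>i(x) r\<^sub>i \<ge> 0\<close>.
  Monotonicity, assumed only for steps \<open>\<lambda> \<le> 1\<close>, reaches arbitrary \<open>t\<close> by convexity of the cube.
\<close>

lemma unit_cube_eq_cbox: "unit_cube = cbox 0 (1 :: real ^ 'n)"
  by (auto simp: unit_cube_def mem_box_cart)

lemma convex_unit_cube: "convex (unit_cube :: (real ^ 'n) set)"
  by (simp add: unit_cube_eq_cbox convex_box)

lemma convex_add_scaleR_between:
  fixes x r :: "'a::real_vector"
  assumes "convex S" "x \<in> S" "x + t *\<^sub>R r \<in> S" "0 \<le> s" "s \<le> t"
  shows "x + s *\<^sub>R r \<in> S"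
proof (cases "s = 0")
  case False
  with assms have "t > 0" by linarith
  have "(1 - s / t) *\<^sub>R x + (s / t) *\<^sub>R (x + t *\<^sub>R r) \<in> S"
    using assms \<open>t > 0\<close> by (intro convexD) auto
  moreover have "(1 - s / t) *\<^sub>R x + (s / t) *\<^sub>R (x + t *\<^sub>R r) = x + s *\<^sub>R r"
    using \<open>t > 0\<close> by (simp add: algebra_simps)
  ultimately show ?thesis by simp
qed (use assms in simp)

lemma mono_along_direction_from_short_steps:
  fixes g :: "'a::real_vector \<Rightarrow> 'b::order"
  assumes "convex S"
    and step: "\<And>y lam. y \<in> S \<Longrightarrow> 0 \<le> lam \<Longrightarrow> lam \<le> 1 \<Longrightarrow> y + lam *\<^sub>R r \<in> S \<Longrightarrow>
                 g y \<le> g (y + lam *\<^sub>R r)"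
    and "x \<in> S" "0 \<le> t" "x + t *\<^sub>R r \<in> S"
  shows "g x \<le> g (x + t *\<^sub>R r)"
proof -
  have bounded: "g x \<le> g (x + t *\<^sub>R r)" if "0 \<le> t" "t \<le> real n" "x + t *\<^sub>R r \<in> S" for n t
    using that
  proof (induction n arbitrary: t)
    case 0
    then show ?case by simp
  next
    case (Suc n)
    show ?case
    proof (cases "t \<le> 1")
      case True
      show ?thesis
        using step[OF \<open>x \<in> S\<close> Suc.prems(1) True Suc.prems(3)] .
    next
      case False
      define y where "y = x + (t - 1) *\<^sub>R r"
      have y: "y \<in> S"
        unfolding y_def using False
        by (intro convex_add_scaleR_between[OF \<open>convex S\<close> \<open>x \<in> S\<close> Suc.prems(3)]) auto
      have shift: "y + 1 *\<^sub>R r = x + t *\<^sub>R r"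
        by (simp add: y_def algebra_simps)
      have "g x \<le> g y"
        unfolding y_def using False Suc.prems y by (intro Suc.IH) (auto simp: y_def)
      also have "g y \<le> g (y + 1 *\<^sub>R r)"
        using Suc.prems(3) shift by (intro step y) simp_all
      finally show ?thesis by (simp only: shift)
    qed
  qed
  obtain n where "t \<le> real n"
    using real_arch_simple by blast
  with assms(4,5) show ?thesis
    using bounded by blast
qed

lemma BGM_vec:
  assumes "FWF f" "0 \<le> c" "c \<le> 1"
  shows "BGM f (vec c) = c"
proof -
  have "vec c \<in> unit_cube"
    using assms by (simp add: unit_cube_def)
  then have "(\<Sum>i\<in>UNIV. f i (vec c)) = 1"
    using \<open>FWF f\<close> unfolding FWF_def by blast
  then show ?thesis
    by (simp add: BGM_def flip: sum_distrib_right)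
qed

lemma BGM_in_unit_interval:
  assumes "FWF f" "x \<in> unit_cube"
  shows "0 \<le> BGM f x" "BGM f x \<le> 1"
proof -
  have f: "\<And>i. 0 \<le> f i x" "(\<Sum>i\<in>UNIV. f i x) = 1" and x: "\<And>i. 0 \<le> x $ i" "\<And>i. x $ i \<le> 1"
    using assms by (auto simp: FWF_def unit_cube_def)
  show "0 \<le> BGM f x"
    unfolding BGM_def using f x by (intro sum_nonneg) simp
  have "BGM f x \<le> (\<Sum>i\<in>UNIV. f i x * 1)"
    unfolding BGM_def using f x by (intro sum_mono mult_left_mono) auto
  with f show "BGM f x \<le> 1" by simp
qed

lemma FWF_nondecreasing_imp_eq:
  assumes "FWF f" "x \<in> unit_cube" "y \<in> unit_cube" "\<And>j. f j x \<le> f j y"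
  shows "f i x = f i y"
proof -
  have "(\<Sum>j\<in>UNIV. f j x) = (\<Sum>j\<in>UNIV. f j y)"
    using assms by (simp add: FWF_def)
  then show ?thesis
    using assms(4) by (rule sum_mono_inv) auto
qed

lemma BGM_add_scaleR_same_weights:
  assumes "\<And>i. f i (x + t *\<^sub>R r) = f i x"
  shows "BGM f (x + t *\<^sub>R r) = BGM f x + t * (\<Sum>i\<in>UNIV. f i x * r $ i)"
  unfolding BGM_def using assms
  by (simp add: algebra_simps sum.distrib sum_distrib_left)

lemma r_increasing_BGM:
  assumes "FWF f" "r \<in> unit_cube"
    and step: "\<And>i x lam. x \<in> unit_cube \<Longrightarrow> 0 \<le> lam \<Longrightarrow> lam \<le> 1 \<Longrightarrow>
                 x + lam *\<^sub>R r \<in> unit_cube \<Longrightarrow> f i x \<le> f i (x + lam *\<^sub>R r)"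
  shows "r_increasing r (BGM f)"
  unfolding r_increasing_def
proof (intro ballI allI impI)
  fix x and t :: real
  assume x: "x \<in> unit_cube" and "t > 0" and xt: "x + t *\<^sub>R r \<in> unit_cube"
  have "f j x \<le> f j (x + t *\<^sub>R r)" for j
    using \<open>t > 0\<close>
    by (intro mono_along_direction_from_short_steps[OF convex_unit_cube step x _ xt]) auto
  then have same: "f i (x + t *\<^sub>R r) = f i x" for i
    using FWF_nondecreasing_imp_eq[OF \<open>FWF f\<close> x xt] by metis
  have "0 \<le> (\<Sum>i\<in>UNIV. f i x * r $ i)"
    using assms(1,2) x by (intro sum_nonneg) (auto simp: FWF_def unit_cube_def)
  with \<open>t > 0\<close> show "BGM f x \<le> BGM f (x + t *\<^sub>R r)"
    by (simp add: BGM_add_scaleR_same_weights[OF same])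
qed

theorem proposition11:
  fixes f :: "'n::finite \<Rightarrow> real ^ 'n \<Rightarrow> real" and r :: "real ^ 'n"
  assumes "FWF f"
    and "r \<in> unit_cube" and "r \<noteq> 0"
    and "\<And>i x lam. x \<in> unit_cube \<Longrightarrow> 0 \<le> lam \<Longrightarrow> lam \<le> 1 \<Longrightarrow>
           x + lam *\<^sub>R r \<in> unit_cube \<Longrightarrow> f i x \<le> f i (x + lam *\<^sub>R r)"
  shows "pre_aggregation (BGM f) \<and> r_increasing r (BGM f)"
proof -
  have "r_increasing r (BGM f)"
    using assms(1,2,4) by (rule r_increasing_BGM)
  moreover have "BGM f (vec 0) = 0" "BGM f (vec 1) = 1"
    by (rule BGM_vec[OF \<open>FWF f\<close>]; simp)+
  ultimately show ?thesis
    unfolding pre_aggregation_def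
    using BGM_in_unit_interval[OF \<open>FWF f\<close>] assms(2,3) by blast
qed

end
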